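(* Let $E$ be a crossed module extension of $\Pi_0$ with $\Pi_1$, $(s^1,s^0)$ a section system for $E$, and $M$ an abelian $\Pi_0$-module. (a) For every pointed $2$-cocycle $z\in Z^2_{\mathrm{pt}}(E,M)$ we have $z^{\mathrm{std}}_M(m)=z_M(m[m]^{-1})$ for $m\in M_E$, and for $g,h\in G_E$ \[z^{\mathrm{std}}_G(h,g)=z_M\big([h[\bar h]^{-1}]^{-1}\,{}^h([g[\bar g]^{-1}]^{-1})\,[hg[\overline{hg}]^{-1}]\big)-z_G\big(\mu([\bar h,\bar g]),[\bar h\bar g]\big)+z_G([\bar h],[\bar g]).\] (b) For every pointed $2$-coboundary $b\in B^2_{\mathrm{pt}}(E,M)$ we have $b^{\mathrm{std}}_M=0$, and if $c\in C^1_{\mathrm{pt}}(E,M)$ with $b=dc$, then $b^{\mathrm{std}}_G(h,g)=(dc_0)(\bar h,\bar g)$ for $g,h\in G_E$, where $c_0\in C^1(\Pi_0,M)$ is $c_0(p)=c([p])$.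
   Context: Let $\Pi_0$ be a group, $\Pi_1$ an abelian $\Pi_0$-module (written multiplicatively), $M$ an abelian $\Pi_0$-module (additive). A crossed module is $(G_V,M_V,\mu)$ with left action ${}^gm$ of $G_V$ on $M_V$, $\mu({}^gm)=g\mu(m)g^{-1}$, ${}^{\mu(n)}m=nmn^{-1}$. A crossed module extension $E$ of $\Pi_0$ with $\Pi_1$ is a crossed module $(G_E,M_E,\mu)$ with a monomorphism $\iota:\Pi_1\to M_E$ and epimorphism $\pi:G_E\to\Pi_0$ such that $\Pi_1\to M_E\to G_E\to\Pi_0$ is exact and ${}^g\iota(k)=\iota(\pi(g)\cdot k)$. Write $\bar g=\pi(g)$; $M$ is a $G_E$-module via $\pi$. A section system $(s^1,s^0)$: maps $s^0:\Pi_0\to G_E$ with $s^0(1)=1$, $\pi s^0=\mathrm{id}$, and $s^1:\mu(M_E)\to M_E$ with $s^1(1)=1$, $\mu s^1=\mathrm{id}$. Notation: $[p]:=s^0(p)$; $[x]:=s^1(x)$ for $x\in\mu(M_E)=\ker\pi$ (e.g. $[h[\bar h]^{-1}]=s^1(hs^0(\bar h)^{-1})$); $[m]:=s^1(\mu(m))$ for $m\in M_E$; $[q,p]:=s^1([q][p][qp]^{-1})$. Cochains of $E$: $C^1(E,M)=\mathrm{Map}(G_E,M)$, $C^2(E,M)=\mathrm{Map}(M_E\times G_E\times G_E,M)$, $(dc)(m,h,g)=c(\mu(m)h)-c(hg)+\bar h\cdot c(g)$, $(dc)(p,n,k,m,h,g)=c(p,\mu(n)k,\mu(m)h)-c(pn,k,hg)+c(n\,{}^km,kh,g)-\bar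 k\cdot c(m,h,g)$ on $C^2$; pointed means $c(1)=0$ resp. $c(1,1,1)=0$; $Z^2_{\mathrm{pt}}=Z^2\cap C^2_{\mathrm{pt}}$, $B^2_{\mathrm{pt}}=B^2\cap C^2_{\mathrm{pt}}$. Module and group parts: $c_M(m)=c(m,1,1)$, $c_G(h,g)=c(1,h,g)$; for $m\in M_E$ we write $c_G(m,h)$ for $c_G(\mu(m),h)$. Standardisation: for $z\in Z^2_{\mathrm{pt}}(E,M)$, $\sigma_z\in C^1_{\mathrm{pt}}(E,M)$ is $\sigma_z(g)=z([g[\bar g]^{-1}],[\bar g],1)$ and $z^{\mathrm{std}}:=z-d\sigma_z$. Group cochain differential: $(dc_0)(h,g)=c_0(h)-c_0(hg)+h\cdot c_0(g)$. *)

theory Defs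
  imports "HOL-Algebra.Algebra"
begin

definition action_by_homs ::
  "('g, 'x) monoid_scheme \<Rightarrow> ('a, 'y) monoid_scheme \<Rightarrow> ('g \<Rightarrow> 'a \<Rightarrow> 'a) \<Rightarrow> bool" where
  "action_by_homs G A act \<longleftrightarrow>
     (\<forall>g\<in>carrier G. act g \<in> hom A A) \<and>
     (\<forall>a\<in>carrier A. act \<one>\<^bsub>G\<^esub> a = a) \<and>
     (\<forall>g\<in>carrier G. \<forall>h\<in>carrier G. \<forall>a\<in>carrier A. act (g \<otimes>\<^bsub>G\<^esub> h) a = act g (act h a))"

definition abelian_module ::
  "('p, 'x) monoid_scheme \<Rightarrow> ('a, 'y) monoid_scheme \<Rightarrow> ('p \<Rightarrow> 'a \<Rightarrow> 'a) \<Rightarrow> bool" where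
  "abelian_module P A act \<longleftrightarrow> group P \<and> comm_group A \<and> action_by_homs P A act"

definition crossed_module ::
  "'g monoid \<Rightarrow> 'n monoid \<Rightarrow> ('n \<Rightarrow> 'g) \<Rightarrow> ('g \<Rightarrow> 'n \<Rightarrow> 'n) \<Rightarrow> bool" where
  "crossed_module G N mu act \<longleftrightarrow>
     group G \<and> group N \<and> mu \<in> hom N G \<and> action_by_homs G N act \<and>
     (\<forall>g\<in>carrier G. \<forall>m\<in>carrier N. mu (act g m) = g \<otimes>\<^bsub>G\<^esub> mu m \<otimes>\<^bsub>G\<^esub> inv\<^bsub>G\<^esub> g) \<and>
     (\<forall>n\<in>carrier N. \<forall>m\<in>carrier N. act (mu n) m = n \<otimes>\<^bsub>N\<^esub> m \<otimes>\<^bsub>N\<^esub> inv\<^bsub>N\<^esub> n)"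

text \<open>Crossed module extension of P (= Pi_0) with K (= Pi_1, an abelian P-module via aK).\<close>
definition crossed_module_extension ::
  "'p monoid \<Rightarrow> 'k monoid \<Rightarrow> ('p \<Rightarrow> 'k \<Rightarrow> 'k) \<Rightarrow>
   'g monoid \<Rightarrow> 'n monoid \<Rightarrow> ('n \<Rightarrow> 'g) \<Rightarrow> ('g \<Rightarrow> 'n \<Rightarrow> 'n) \<Rightarrow>
   ('k \<Rightarrow> 'n) \<Rightarrow> ('g \<Rightarrow> 'p) \<Rightarrow> bool" where
  "crossed_module_extension P K aK G N mu act iota prj \<longleftrightarrow>
     crossed_module G N mu act \<and> abelian_module P K aK \<and>
     iota \<in> hom K N \<and> inj_on iota (carrier K) \<and>
     prj \<in> hom G P \<and> prj ` carrier G = carrier P \<and>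
     iota ` carrier K = kernel N G mu \<and>
     mu ` carrier N = kernel G P prj \<and>
     (\<forall>g\<in>carrier G. \<forall>k\<in>carrier K. act g (iota k) = iota (aK (prj g) k))"

definition section_system ::
  "'p monoid \<Rightarrow> 'g monoid \<Rightarrow> 'n monoid \<Rightarrow> ('n \<Rightarrow> 'g) \<Rightarrow> ('g \<Rightarrow> 'p) \<Rightarrow>
   ('g \<Rightarrow> 'n) \<Rightarrow> ('p \<Rightarrow> 'g) \<Rightarrow> bool" where
  "section_system P G N mu prj s1 s0 \<longleftrightarrow>
     (\<forall>p\<in>carrier P. s0 p \<in> carrier G \<and> prj (s0 p) = p) \<and> s0 \<one>\<^bsub>P\<^esub> = \<one>\<^bsub>G\<^esub> \<and>
     (\<forall>x\<in>mu ` carrier N. s1 x \<in> carrier N \<and> mu (s1 x) = x) \<and> s1 \<one>\<^bsub>G\<^esub> = \<one>\<^bsub>N\<^esub>"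

subsection \<open>Cochains (M an abelian group written multiplicatively; 0 = one, + = mult)\<close>

definition C1 :: "'g monoid \<Rightarrow> 'm monoid \<Rightarrow> ('g \<Rightarrow> 'm) set" where
  "C1 G M = carrier G \<rightarrow> carrier M"

definition C1_pt :: "'g monoid \<Rightarrow> 'm monoid \<Rightarrow> ('g \<Rightarrow> 'm) set" where
  "C1_pt G M = {c \<in> C1 G M. c \<one>\<^bsub>G\<^esub> = \<one>\<^bsub>M\<^esub>}"

definition C2 :: "'n monoid \<Rightarrow> 'g monoid \<Rightarrow> 'm monoid \<Rightarrow> ('n \<Rightarrow> 'g \<Rightarrow> 'g \<Rightarrow> 'm) set" where
  "C2 N G M = {c. \<forall>m\<in>carrier N. \<forall>h\<in>carrier G. \<forall>g\<in>carrier G. c m h g \<in> carrier M}"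

definition C2_pt :: "'n monoid \<Rightarrow> 'g monoid \<Rightarrow> 'm monoid \<Rightarrow> ('n \<Rightarrow> 'g \<Rightarrow> 'g \<Rightarrow> 'm) set" where
  "C2_pt N G M = {c \<in> C2 N G M. c \<one>\<^bsub>N\<^esub> \<one>\<^bsub>G\<^esub> \<one>\<^bsub>G\<^esub> = \<one>\<^bsub>M\<^esub>}"

definition d1 ::
  "'g monoid \<Rightarrow> 'm monoid \<Rightarrow> ('n \<Rightarrow> 'g) \<Rightarrow> ('g \<Rightarrow> 'p) \<Rightarrow> ('p \<Rightarrow> 'm \<Rightarrow> 'm) \<Rightarrow>
   ('g \<Rightarrow> 'm) \<Rightarrow> 'n \<Rightarrow> 'g \<Rightarrow> 'g \<Rightarrow> 'm" where
  "d1 G M mu prj aM c = (\<lambda>m h g.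
     c (mu m \<otimes>\<^bsub>G\<^esub> h) \<otimes>\<^bsub>M\<^esub> inv\<^bsub>M\<^esub> (c (h \<otimes>\<^bsub>G\<^esub> g)) \<otimes>\<^bsub>M\<^esub> aM (prj h) (c g))"

definition d2 ::
  "'g monoid \<Rightarrow> 'n monoid \<Rightarrow> 'm monoid \<Rightarrow> ('n \<Rightarrow> 'g) \<Rightarrow> ('g \<Rightarrow> 'n \<Rightarrow> 'n) \<Rightarrow> ('g \<Rightarrow> 'p) \<Rightarrow>
   ('p \<Rightarrow> 'm \<Rightarrow> 'm) \<Rightarrow> ('n \<Rightarrow> 'g \<Rightarrow> 'g \<Rightarrow> 'm) \<Rightarrow> 'n \<Rightarrow> 'n \<Rightarrow> 'g \<Rightarrow> 'n \<Rightarrow> 'g \<Rightarrow> 'g \<Rightarrow> 'm" where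
  "d2 G N M mu act prj aM c = (\<lambda>p n k m h g.
     c p (mu n \<otimes>\<^bsub>G\<^esub> k) (mu m \<otimes>\<^bsub>G\<^esub> h)
     \<otimes>\<^bsub>M\<^esub> inv\<^bsub>M\<^esub> (c (p \<otimes>\<^bsub>N\<^esub> n) k (h \<otimes>\<^bsub>G\<^esub> g))
     \<otimes>\<^bsub>M\<^esub> c (n \<otimes>\<^bsub>N\<^esub> act k m) (k \<otimes>\<^bsub>G\<^esub> h) g
     \<otimes>\<^bsub>M\<^esub> inv\<^bsub>M\<^esub> (aM (prj k) (c m h g)))"

definition Z2_pt ::
  "'g monoid \<Rightarrow> 'n monoid \<Rightarrow> 'm monoid \<Rightarrow> ('n \<Rightarrow> 'g) \<Rightarrow> ('g \<Rightarrow> 'n \<Rightarrow> 'n) \<Rightarrow> ('g \<Rightarrow> 'p) \<Rightarrow>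
   ('p \<Rightarrow> 'm \<Rightarrow> 'm) \<Rightarrow> ('n \<Rightarrow> 'g \<Rightarrow> 'g \<Rightarrow> 'm) set" where
  "Z2_pt G N M mu act prj aM = {c \<in> C2_pt N G M.
     \<forall>p\<in>carrier N. \<forall>n\<in>carrier N. \<forall>k\<in>carrier G. \<forall>m\<in>carrier N. \<forall>h\<in>carrier G. \<forall>g\<in>carrier G.
       d2 G N M mu act prj aM c p n k m h g = \<one>\<^bsub>M\<^esub>}"

definition B2_pt ::
  "'g monoid \<Rightarrow> 'n monoid \<Rightarrow> 'm monoid \<Rightarrow> ('n \<Rightarrow> 'g) \<Rightarrow> ('g \<Rightarrow> 'p) \<Rightarrow>
   ('p \<Rightarrow> 'm \<Rightarrow> 'm) \<Rightarrow> ('n \<Rightarrow> 'g \<Rightarrow> 'g \<Rightarrow> 'm) set" where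
  "B2_pt G N M mu prj aM = {b \<in> C2_pt N G M. \<exists>c\<in>C1 G M.
     \<forall>m\<in>carrier N. \<forall>h\<in>carrier G. \<forall>g\<in>carrier G. b m h g = d1 G M mu prj aM c m h g}"

definition sigma_std ::
  "'g monoid \<Rightarrow> ('g \<Rightarrow> 'p) \<Rightarrow> ('g \<Rightarrow> 'n) \<Rightarrow> ('p \<Rightarrow> 'g) \<Rightarrow> ('n \<Rightarrow> 'g \<Rightarrow> 'g \<Rightarrow> 'm) \<Rightarrow> 'g \<Rightarrow> 'm" where
  "sigma_std G prj s1 s0 z = (\<lambda>g. z (s1 (g \<otimes>\<^bsub>G\<^esub> inv\<^bsub>G\<^esub> (s0 (prj g)))) (s0 (prj g)) \<one>\<^bsub>G\<^esub>)"

definition std ::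
  "'g monoid \<Rightarrow> 'm monoid \<Rightarrow> ('n \<Rightarrow> 'g) \<Rightarrow> ('g \<Rightarrow> 'p) \<Rightarrow> ('p \<Rightarrow> 'm \<Rightarrow> 'm) \<Rightarrow>
   ('g \<Rightarrow> 'n) \<Rightarrow> ('p \<Rightarrow> 'g) \<Rightarrow> ('n \<Rightarrow> 'g \<Rightarrow> 'g \<Rightarrow> 'm) \<Rightarrow> 'n \<Rightarrow> 'g \<Rightarrow> 'g \<Rightarrow> 'm" where
  "std G M mu prj aM s1 s0 z = (\<lambda>m h g.
     z m h g \<otimes>\<^bsub>M\<^esub> inv\<^bsub>M\<^esub> (d1 G M mu prj aM (sigma_std G prj s1 s0 z) m h g))"

definition part_M :: "'g monoid \<Rightarrow> ('n \<Rightarrow> 'g \<Rightarrow> 'g \<Rightarrow> 'm) \<Rightarrow> 'n \<Rightarrow> 'm" where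
  "part_M G c = (\<lambda>m. c m \<one>\<^bsub>G\<^esub> \<one>\<^bsub>G\<^esub>)"

definition part_G :: "'n monoid \<Rightarrow> ('n \<Rightarrow> 'g \<Rightarrow> 'g \<Rightarrow> 'm) \<Rightarrow> 'g \<Rightarrow> 'g \<Rightarrow> 'm" where
  "part_G N c = (\<lambda>h g. c \<one>\<^bsub>N\<^esub> h g)"

definition d_grp ::
  "'p monoid \<Rightarrow> 'm monoid \<Rightarrow> ('p \<Rightarrow> 'm \<Rightarrow> 'm) \<Rightarrow> ('p \<Rightarrow> 'm) \<Rightarrow> 'p \<Rightarrow> 'p \<Rightarrow> 'm" where
  "d_grp P M aM c0 = (\<lambda>h g. c0 h \<otimes>\<^bsub>M\<^esub> inv\<^bsub>M\<^esub> (c0 (h \<otimes>\<^bsub>P\<^esub> g)) \<otimes>\<^bsub>M\<^esub> aM h (c0 g))"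

end

theory Submission
  imports Defs
begin

(*
  For a pointed 2-cocycle z, specialising the cocycle condition dz = 0 yields a handful of
  rules: the group part z_G is a group cocycle vanishing at units, z(-,-,1) is twistedly
  additive, and z_G(h,g) changes in a controlled way when h or g is moved by an element of
  the image of mu (left_shift, right_shift).  Writing h = mu(a)A, g = mu(b)B,
  hg = mu(c)q with A = [h], B = [g], q = [hg] and x = a^-1 (h.b^-1) c, these rules give
  z_G(h,g) + z(c,q,1) + z_G(mu x, q) = z_M(x) + z_G(A,B) + sigma(h) + h.sigma(g)
  (group_part_decomposition), which is part (a) after solving for z^std_G(h,g).
  For a coboundary b = dc one has sigma_b(g) = c(g) - c([g]), and part (b) is the
  identity (x - y + u) - ((x - a) - (y - e) + (u - f)) = a - e + f.
*)

context comm_group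
begin

text \<open>Rewriting with this before
  normalising modulo associativity and commutativity avoids having to cancel \<open>x\<close> against
  \<open>inv x\<close> inside a sorted product, which the simplifier cannot do.\<close>
lemma fraction_eq:
  assumes "a \<in> carrier G" "b \<in> carrier G" "c \<in> carrier G" "d \<in> carrier G"
  shows "a \<otimes> inv b = c \<otimes> inv d \<longleftrightarrow> a \<otimes> d = c \<otimes> b"
proof -
  have "a \<otimes> inv b = c \<otimes> inv d \<longleftrightarrow> a = c \<otimes> inv d \<otimes> b"
    using assms by (simp add: inv_solve_right')
  also have "c \<otimes> inv d \<otimes> b = (c \<otimes> b) \<otimes> inv d"
    using assms by (simp add: m_ac)
  also have "a = (c \<otimes> b) \<otimes> inv d \<longleftrightarrow> a \<otimes> d = c \<otimes> b"
    using assms inv_solve_right[of a "c \<otimes> b" d] by auto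
  finally show ?thesis .
qed

lemma alternating_relation:
  assumes "a \<in> carrier G" "b \<in> carrier G" "c \<in> carrier G" "d \<in> carrier G"
    and "a \<otimes> inv b \<otimes> c \<otimes> inv d = \<one>"
  shows "a \<otimes> c = b \<otimes> d"
proof -
  have "(a \<otimes> c) \<otimes> inv (b \<otimes> d) = a \<otimes> inv b \<otimes> c \<otimes> inv d"
    using assms(1-4) by (simp add: inv_mult m_ac)
  then show ?thesis
    using assms inv_solve_right'[of \<one> "a \<otimes> c" "b \<otimes> d"] by simp
qed

lemma difference_of_alternating_sum:
  assumes "u \<in> carrier G" "a \<in> carrier G" "b \<in> carrier G" "c \<in> carrier G"
    and "v \<in> carrier G" "w \<in> carrier G" "y \<in> carrier G"
    and "u \<otimes> b \<otimes> w = (v \<otimes> y) \<otimes> (a \<otimes> c)"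
  shows "u \<otimes> inv (a \<otimes> inv b \<otimes> c) = v \<otimes> inv w \<otimes> y"
proof -
  have "u \<otimes> inv (a \<otimes> inv b \<otimes> c) = (u \<otimes> b) \<otimes> inv (a \<otimes> c)"
    using assms(1-7) by (simp add: inv_mult m_ac)
  also have "\<dots> = (v \<otimes> y) \<otimes> inv w"
    using assms fraction_eq[of "u \<otimes> b" "a \<otimes> c" "v \<otimes> y" w] by simp
  also have "\<dots> = v \<otimes> inv w \<otimes> y"
    using assms(1-7) by (simp add: m_ac)
  finally show ?thesis .
qed

lemma fraction_div:
  assumes "p \<in> carrier G" "q \<in> carrier G" "r \<in> carrier G" "s \<in> carrier G"
  shows "(p \<otimes> inv q) \<otimes> inv (r \<otimes> inv s) = (p \<otimes> s) \<otimes> inv (q \<otimes> r)"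
  using assms by (simp add: inv_mult m_ac)

lemma difference_of_differences:
  assumes "x \<in> carrier G" "y \<in> carrier G" "u \<in> carrier G"
    and "a \<in> carrier G" "e \<in> carrier G" "f \<in> carrier G"
  shows "x \<otimes> inv y \<otimes> u \<otimes> inv ((x \<otimes> inv a) \<otimes> inv (y \<otimes> inv e) \<otimes> (u \<otimes> inv f))
    = a \<otimes> inv e \<otimes> f"
proof -
  have "x \<otimes> inv y \<otimes> u = (x \<otimes> u) \<otimes> inv y"
    using assms by (simp add: m_ac)
  moreover have "(x \<otimes> inv a) \<otimes> inv (y \<otimes> inv e) \<otimes> (u \<otimes> inv f)
      = (x \<otimes> e \<otimes> u) \<otimes> inv (a \<otimes> y \<otimes> f)"
    using assms by (simp add: inv_mult m_ac)
  ultimately have "x \<otimes> inv y \<otimes> u \<otimes> inv ((x \<otimes> inv a) \<otimes> inv (y \<otimes> inv e) \<otimes> (u \<otimes> inv f))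
      = (x \<otimes> u \<otimes> (a \<otimes> y \<otimes> f)) \<otimes> inv (y \<otimes> (x \<otimes> e \<otimes> u))"
    using assms by (simp add: fraction_div)
  also have "\<dots> = (a \<otimes> f) \<otimes> inv e"
    using assms by (subst fraction_eq) (simp_all add: m_ac)
  also have "\<dots> = a \<otimes> inv e \<otimes> f"
    using assms by (simp add: m_ac)
  finally show ?thesis .
qed

end

locale crossed_module_with_module =
  G: group G + N: group N + P: group P + M: comm_group M
  for G :: "'g monoid" and N :: "'n monoid" and P :: "'p monoid" and M :: "'m monoid" +
  fixes mu :: "'n \<Rightarrow> 'g" and act :: "'g \<Rightarrow> 'n \<Rightarrow> 'n" and prj :: "'g \<Rightarrow> 'p"
    and aM :: "'p \<Rightarrow> 'm \<Rightarrow> 'm"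
  assumes mu_hom: "mu \<in> hom N G"
    and act_hom: "g \<in> carrier G \<Longrightarrow> act g \<in> hom N N"
    and act_mult: "\<lbrakk>g \<in> carrier G; h \<in> carrier G; m \<in> carrier N\<rbrakk> \<Longrightarrow>
        act (g \<otimes>\<^bsub>G\<^esub> h) m = act g (act h m)"
    and peiffer_equivariance: "\<lbrakk>g \<in> carrier G; m \<in> carrier N\<rbrakk> \<Longrightarrow>
        mu (act g m) = g \<otimes>\<^bsub>G\<^esub> mu m \<otimes>\<^bsub>G\<^esub> inv\<^bsub>G\<^esub> g"
    and peiffer_identity: "\<lbrakk>n \<in> carrier N; m \<in> carrier N\<rbrakk> \<Longrightarrow>
        act (mu n) m = n \<otimes>\<^bsub>N\<^esub> m \<otimes>\<^bsub>N\<^esub> inv\<^bsub>N\<^esub> n"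
    and prj_hom: "prj \<in> hom G P"
    and aM_hom: "p \<in> carrier P \<Longrightarrow> aM p \<in> hom M M"
    and aM_one: "y \<in> carrier M \<Longrightarrow> aM \<one>\<^bsub>P\<^esub> y = y"
begin

sublocale mu: group_hom N G mu by unfold_locales (rule mu_hom)
sublocale prj: group_hom G P prj by unfold_locales (rule prj_hom)

lemma act_group_hom: "g \<in> carrier G \<Longrightarrow> group_hom N N (act g)"
  by unfold_locales (rule act_hom)

lemma aM_group_hom: "p \<in> carrier P \<Longrightarrow> group_hom M M (aM p)"
  by unfold_locales (rule aM_hom)

lemma act_closed [simp]: "\<lbrakk>g \<in> carrier G; m \<in> carrier N\<rbrakk> \<Longrightarrow> act g m \<in> carrier N"
  using group_hom.hom_closed[OF act_group_hom] by blast

lemma act_inv: "\<lbrakk>g \<in> carrier G; m \<in> carrier N\<rbrakk> \<Longrightarrow> act g (inv\<^bsub>N\<^esub> m) = inv\<^bsub>N\<^esub> (act g m)"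
  using group_hom.hom_inv[OF act_group_hom] by blast

lemma act_one [simp]: "g \<in> carrier G \<Longrightarrow> act g \<one>\<^bsub>N\<^esub> = \<one>\<^bsub>N\<^esub>"
  using group_hom.hom_one[OF act_group_hom] by blast

lemma aM_closed [simp]: "\<lbrakk>p \<in> carrier P; y \<in> carrier M\<rbrakk> \<Longrightarrow> aM p y \<in> carrier M"
  using group_hom.hom_closed[OF aM_group_hom] by blast

lemma aM_unit [simp]: "p \<in> carrier P \<Longrightarrow> aM p \<one>\<^bsub>M\<^esub> = \<one>\<^bsub>M\<^esub>"
  using group_hom.hom_one[OF aM_group_hom] by blast

lemma aM_mult: "\<lbrakk>p \<in> carrier P; x \<in> carrier M; y \<in> carrier M\<rbrakk> \<Longrightarrow>
    aM p (x \<otimes>\<^bsub>M\<^esub> y) = aM p x \<otimes>\<^bsub>M\<^esub> aM p y"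
  using group_hom.hom_mult[OF aM_group_hom] by blast

lemma aM_inv: "\<lbrakk>p \<in> carrier P; y \<in> carrier M\<rbrakk> \<Longrightarrow> aM p (inv\<^bsub>M\<^esub> y) = inv\<^bsub>M\<^esub> (aM p y)"
  using group_hom.hom_inv[OF aM_group_hom] by blast

lemma mu_act_commute:
  assumes "k \<in> carrier G" "b \<in> carrier N"
  shows "mu (act k b) \<otimes>\<^bsub>G\<^esub> k = k \<otimes>\<^bsub>G\<^esub> mu b"
  using assms by (simp add: peiffer_equivariance G.m_assoc)

lemma twisted_quotient:
  assumes a: "a \<in> carrier N" and b: "b \<in> carrier N" and c: "c \<in> carrier N"
    and A: "A \<in> carrier G" and B: "B \<in> carrier G" and q: "q \<in> carrier G"
    and ha: "mu a \<otimes>\<^bsub>G\<^esub> A = h" and hb: "mu b \<otimes>\<^bsub>G\<^esub> B = g" and hc: "mu c \<otimes>\<^bsub>G\<^esub> q = h \<otimes>\<^bsub>G\<^esub> g"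
  defines "x \<equiv> inv\<^bsub>N\<^esub> a \<otimes>\<^bsub>N\<^esub> act h (inv\<^bsub>N\<^esub> b) \<otimes>\<^bsub>N\<^esub> c"
  shows "x \<in> carrier N" and "c = a \<otimes>\<^bsub>N\<^esub> (act A b \<otimes>\<^bsub>N\<^esub> x)"
    and "mu x \<otimes>\<^bsub>G\<^esub> q = A \<otimes>\<^bsub>G\<^esub> B"
proof -
  define b' where "b' = act A b"
  have b': "b' \<in> carrier N" using A b by (simp add: b'_def)
  have "act h (inv\<^bsub>N\<^esub> b) = act (mu a) (inv\<^bsub>N\<^esub> b')"
    using a b A by (simp add: ha[symmetric] act_mult act_inv b'_def)
  also have "\<dots> = a \<otimes>\<^bsub>N\<^esub> inv\<^bsub>N\<^esub> b' \<otimes>\<^bsub>N\<^esub> inv\<^bsub>N\<^esub> a"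
    using a b' by (simp add: peiffer_identity)
  finally have x_eq: "x = inv\<^bsub>N\<^esub> b' \<otimes>\<^bsub>N\<^esub> (inv\<^bsub>N\<^esub> a \<otimes>\<^bsub>N\<^esub> c)"
    using a b' c by (simp add: x_def N.m_assoc[symmetric])
  then show "x \<in> carrier N" using a b' c by simp
  show "c = a \<otimes>\<^bsub>N\<^esub> (act A b \<otimes>\<^bsub>N\<^esub> x)"
    using a b' c by (simp add: x_eq b'_def[symmetric] N.m_assoc[symmetric])
  have hc': "inv\<^bsub>G\<^esub> (mu a) \<otimes>\<^bsub>G\<^esub> (mu c \<otimes>\<^bsub>G\<^esub> q) = A \<otimes>\<^bsub>G\<^esub> (mu b \<otimes>\<^bsub>G\<^esub> B)"
    using a b c A B q by (simp add: hc ha[symmetric] hb[symmetric] G.m_assoc[symmetric])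
  have "mu x \<otimes>\<^bsub>G\<^esub> q = inv\<^bsub>G\<^esub> (mu b') \<otimes>\<^bsub>G\<^esub> (inv\<^bsub>G\<^esub> (mu a) \<otimes>\<^bsub>G\<^esub> (mu c \<otimes>\<^bsub>G\<^esub> q))"
    using a b' c q by (simp add: x_eq G.m_assoc)
  also have "\<dots> = inv\<^bsub>G\<^esub> (mu b') \<otimes>\<^bsub>G\<^esub> (mu b' \<otimes>\<^bsub>G\<^esub> (A \<otimes>\<^bsub>G\<^esub> B))"
    using b A B by (simp add: hc' G.m_assoc[symmetric] mu_act_commute[symmetric] b'_def)
  also have "\<dots> = A \<otimes>\<^bsub>G\<^esub> B"
    using b' A B by (simp add: G.m_assoc[symmetric])
  finally show "mu x \<otimes>\<^bsub>G\<^esub> q = A \<otimes>\<^bsub>G\<^esub> B" .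
qed

end

locale pointed_cocycle = crossed_module_with_module +
  fixes z
  assumes z_closed [simp]: "\<lbrakk>m \<in> carrier N; h \<in> carrier G; g \<in> carrier G\<rbrakk> \<Longrightarrow> z m h g \<in> carrier M"
    and z_pointed: "z \<one>\<^bsub>N\<^esub> \<one>\<^bsub>G\<^esub> \<one>\<^bsub>G\<^esub> = \<one>\<^bsub>M\<^esub>"
    and z_cocycle: "\<lbrakk>p \<in> carrier N; n \<in> carrier N; k \<in> carrier G; m \<in> carrier N;
        h \<in> carrier G; g \<in> carrier G\<rbrakk> \<Longrightarrow> d2 G N M mu act prj aM z p n k m h g = \<one>\<^bsub>M\<^esub>"
begin

lemma cocycle_identity:
  assumes "p \<in> carrier N" "n \<in> carrier N" "k \<in> carrier G" "m \<in> carrier N"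
    and "h \<in> carrier G" "g \<in> carrier G"
  shows "z p (mu n \<otimes>\<^bsub>G\<^esub> k) (mu m \<otimes>\<^bsub>G\<^esub> h) \<otimes>\<^bsub>M\<^esub> z (n \<otimes>\<^bsub>N\<^esub> act k m) (k \<otimes>\<^bsub>G\<^esub> h) g
    = z (p \<otimes>\<^bsub>N\<^esub> n) k (h \<otimes>\<^bsub>G\<^esub> g) \<otimes>\<^bsub>M\<^esub> aM (prj k) (z m h g)"
  using M.alternating_relation z_cocycle[OF assms] assms by (simp add: d2_def)

lemma group_part_unit_left [simp]: "g \<in> carrier G \<Longrightarrow> z \<one>\<^bsub>N\<^esub> \<one>\<^bsub>G\<^esub> g = \<one>\<^bsub>M\<^esub>"
  using cocycle_identity[of "\<one>\<^bsub>N\<^esub>" "\<one>\<^bsub>N\<^esub>" "\<one>\<^bsub>G\<^esub>" "\<one>\<^bsub>N\<^esub>" "\<one>\<^bsub>G\<^esub>" g]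
  by (simp add: z_pointed aM_one)

lemma group_part_unit_right [simp]: "k \<in> carrier G \<Longrightarrow> z \<one>\<^bsub>N\<^esub> k \<one>\<^bsub>G\<^esub> = \<one>\<^bsub>M\<^esub>"
  using cocycle_identity[of "\<one>\<^bsub>N\<^esub>" "\<one>\<^bsub>N\<^esub>" k "\<one>\<^bsub>N\<^esub>" "\<one>\<^bsub>G\<^esub>" "\<one>\<^bsub>G\<^esub>"]
  by (simp add: z_pointed)

lemma cochain_split:
  assumes "n \<in> carrier N" "k \<in> carrier G" "g \<in> carrier G"
  shows "z n k g = z n k \<one>\<^bsub>G\<^esub> \<otimes>\<^bsub>M\<^esub> z \<one>\<^bsub>N\<^esub> k g"
  using cocycle_identity[of n "\<one>\<^bsub>N\<^esub>" k "\<one>\<^bsub>N\<^esub>" "\<one>\<^bsub>G\<^esub>" g] assms by simp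

lemma twisted_additivity:
  assumes "p \<in> carrier N" "n \<in> carrier N" "k \<in> carrier G"
  shows "z (p \<otimes>\<^bsub>N\<^esub> n) k \<one>\<^bsub>G\<^esub> = z p (mu n \<otimes>\<^bsub>G\<^esub> k) \<one>\<^bsub>G\<^esub> \<otimes>\<^bsub>M\<^esub> z n k \<one>\<^bsub>G\<^esub>"
  using cocycle_identity[of p n k "\<one>\<^bsub>N\<^esub>" "\<one>\<^bsub>G\<^esub>" "\<one>\<^bsub>G\<^esub>"] assms by simp

lemma left_shift:
  assumes "n \<in> carrier N" "k \<in> carrier G" "h \<in> carrier G"
  shows "z \<one>\<^bsub>N\<^esub> (mu n \<otimes>\<^bsub>G\<^esub> k) h \<otimes>\<^bsub>M\<^esub> z n (k \<otimes>\<^bsub>G\<^esub> h) \<one>\<^bsub>G\<^esub>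
    = z n k \<one>\<^bsub>G\<^esub> \<otimes>\<^bsub>M\<^esub> z \<one>\<^bsub>N\<^esub> k h"
  using cocycle_identity[of "\<one>\<^bsub>N\<^esub>" n k "\<one>\<^bsub>N\<^esub>" h "\<one>\<^bsub>G\<^esub>"] cochain_split[of n k h] assms
  by simp

lemma group_part_on_image:
  assumes "k \<in> carrier G" "m \<in> carrier N"
  shows "z \<one>\<^bsub>N\<^esub> k (mu m) \<otimes>\<^bsub>M\<^esub> z (act k m) k \<one>\<^bsub>G\<^esub> = aM (prj k) (z m \<one>\<^bsub>G\<^esub> \<one>\<^bsub>G\<^esub>)"
  using cocycle_identity[of "\<one>\<^bsub>N\<^esub>" "\<one>\<^bsub>N\<^esub>" k m "\<one>\<^bsub>G\<^esub>" "\<one>\<^bsub>G\<^esub>"] assms by simp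

lemma group_part_cocycle:
  assumes "k \<in> carrier G" "h \<in> carrier G" "g \<in> carrier G"
  shows "z \<one>\<^bsub>N\<^esub> k h \<otimes>\<^bsub>M\<^esub> z \<one>\<^bsub>N\<^esub> (k \<otimes>\<^bsub>G\<^esub> h) g
    = z \<one>\<^bsub>N\<^esub> k (h \<otimes>\<^bsub>G\<^esub> g) \<otimes>\<^bsub>M\<^esub> aM (prj k) (z \<one>\<^bsub>N\<^esub> h g)"
  using cocycle_identity[of "\<one>\<^bsub>N\<^esub>" "\<one>\<^bsub>N\<^esub>" k "\<one>\<^bsub>N\<^esub>" h g] assms by simp

lemma module_part_split:
  assumes "x \<in> carrier N" "q \<in> carrier G"
  shows "z x q \<one>\<^bsub>G\<^esub> \<otimes>\<^bsub>M\<^esub> z \<one>\<^bsub>N\<^esub> (mu x) q = z x \<one>\<^bsub>G\<^esub> \<one>\<^bsub>G\<^esub>"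
  using left_shift[of x "\<one>\<^bsub>G\<^esub>" q] assms by (simp add: M.m_comm)

lemma kernel_module_part:
  assumes "v \<in> carrier N" "mu v = \<one>\<^bsub>G\<^esub>" "k \<in> carrier G"
  shows "z v k \<one>\<^bsub>G\<^esub> = z v \<one>\<^bsub>G\<^esub> \<one>\<^bsub>G\<^esub>"
  using module_part_split[of v k] assms by simp

lemma right_shift:
  assumes k: "k \<in> carrier G" and b: "b \<in> carrier N" and B: "B \<in> carrier G"
  shows "z \<one>\<^bsub>N\<^esub> k (mu b \<otimes>\<^bsub>G\<^esub> B) \<otimes>\<^bsub>M\<^esub> z (act k b) (k \<otimes>\<^bsub>G\<^esub> B) \<one>\<^bsub>G\<^esub>
    = z \<one>\<^bsub>N\<^esub> k B \<otimes>\<^bsub>M\<^esub> aM (prj k) (z b B \<one>\<^bsub>G\<^esub>)"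
proof -
  have kP: "prj k \<in> carrier P" using k by simp
  have b': "act k b \<in> carrier N" using k b by simp
  let ?X = "z \<one>\<^bsub>N\<^esub> k (mu b \<otimes>\<^bsub>G\<^esub> B)" and ?Y = "z (act k b) (k \<otimes>\<^bsub>G\<^esub> B) \<one>\<^bsub>G\<^esub>"
    and ?Z = "z \<one>\<^bsub>N\<^esub> k B" and ?W = "aM (prj k) (z b B \<one>\<^bsub>G\<^esub>)"
    and ?c = "aM (prj k) (z \<one>\<^bsub>N\<^esub> (mu b) B)"
  have cocycle: "z \<one>\<^bsub>N\<^esub> k (mu b) \<otimes>\<^bsub>M\<^esub> z \<one>\<^bsub>N\<^esub> (k \<otimes>\<^bsub>G\<^esub> mu b) B = ?X \<otimes>\<^bsub>M\<^esub> ?c"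
    using group_part_cocycle[of k "mu b" B] k b B by simp
  have shift: "z \<one>\<^bsub>N\<^esub> (k \<otimes>\<^bsub>G\<^esub> mu b) B \<otimes>\<^bsub>M\<^esub> ?Y = z (act k b) k \<one>\<^bsub>G\<^esub> \<otimes>\<^bsub>M\<^esub> ?Z"
    using left_shift[of "act k b" k B] k b B by (simp add: mu_act_commute)
  have image: "z \<one>\<^bsub>N\<^esub> k (mu b) \<otimes>\<^bsub>M\<^esub> z (act k b) k \<one>\<^bsub>G\<^esub> = aM (prj k) (z b \<one>\<^bsub>G\<^esub> \<one>\<^bsub>G\<^esub>)"
    using group_part_on_image[of k b] k b by simp
  have acted_split: "?W \<otimes>\<^bsub>M\<^esub> ?c = aM (prj k) (z b \<one>\<^bsub>G\<^esub> \<one>\<^bsub>G\<^esub>)"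
    using module_part_split[of b B] kP b B by (simp add: aM_mult[symmetric])
  have "?X \<otimes>\<^bsub>M\<^esub> ?Y \<otimes>\<^bsub>M\<^esub> ?c = (?X \<otimes>\<^bsub>M\<^esub> ?c) \<otimes>\<^bsub>M\<^esub> ?Y"
    using k b B b' by (simp add: M.m_ac)
  also have "\<dots> = z \<one>\<^bsub>N\<^esub> k (mu b) \<otimes>\<^bsub>M\<^esub> (z \<one>\<^bsub>N\<^esub> (k \<otimes>\<^bsub>G\<^esub> mu b) B \<otimes>\<^bsub>M\<^esub> ?Y)"
    using k b B b' by (simp add: cocycle[symmetric] M.m_assoc)
  also have "\<dots> = (z \<one>\<^bsub>N\<^esub> k (mu b) \<otimes>\<^bsub>M\<^esub> z (act k b) k \<one>\<^bsub>G\<^esub>) \<otimes>\<^bsub>M\<^esub> ?Z"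
    using k b B b' by (simp add: shift M.m_assoc)
  also have "\<dots> = ?Z \<otimes>\<^bsub>M\<^esub> ?W \<otimes>\<^bsub>M\<^esub> ?c"
    using k b B kP by (simp add: image acted_split[symmetric] M.m_ac)
  finally show ?thesis
    using k b B b' kP by simp
qed

lemma group_part_decomposition:
  assumes a: "a \<in> carrier N" and b: "b \<in> carrier N" and x: "x \<in> carrier N"
    and A: "A \<in> carrier G" and B: "B \<in> carrier G" and q: "q \<in> carrier G"
    and c: "c = a \<otimes>\<^bsub>N\<^esub> (act A b \<otimes>\<^bsub>N\<^esub> x)" and xq: "mu x \<otimes>\<^bsub>G\<^esub> q = A \<otimes>\<^bsub>G\<^esub> B"
  defines "h \<equiv> mu a \<otimes>\<^bsub>G\<^esub> A" and "g \<equiv> mu b \<otimes>\<^bsub>G\<^esub> B"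
  shows "z \<one>\<^bsub>N\<^esub> h g \<otimes>\<^bsub>M\<^esub> z c q \<one>\<^bsub>G\<^esub> \<otimes>\<^bsub>M\<^esub> z \<one>\<^bsub>N\<^esub> (mu x) q
    = (z x \<one>\<^bsub>G\<^esub> \<one>\<^bsub>G\<^esub> \<otimes>\<^bsub>M\<^esub> z \<one>\<^bsub>N\<^esub> A B) \<otimes>\<^bsub>M\<^esub> (z a A \<one>\<^bsub>G\<^esub> \<otimes>\<^bsub>M\<^esub> aM (prj A) (z b B \<one>\<^bsub>G\<^esub>))"
proof -
  define b' where "b' = act A b"
  have b': "b' \<in> carrier N" and g: "g \<in> carrier G" and AP: "prj A \<in> carrier P"
    using A b B by (simp_all add: b'_def g_def)
  have Ag: "mu b' \<otimes>\<^bsub>G\<^esub> (A \<otimes>\<^bsub>G\<^esub> B) = A \<otimes>\<^bsub>G\<^esub> g"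
    using A b B by (simp add: b'_def g_def mu_act_commute G.m_assoc[symmetric])
  have left: "z \<one>\<^bsub>N\<^esub> h g \<otimes>\<^bsub>M\<^esub> z a (A \<otimes>\<^bsub>G\<^esub> g) \<one>\<^bsub>G\<^esub> = z a A \<one>\<^bsub>G\<^esub> \<otimes>\<^bsub>M\<^esub> z \<one>\<^bsub>N\<^esub> A g"
    using left_shift[of a A g] a A g by (simp add: h_def)
  have right: "z \<one>\<^bsub>N\<^esub> A g \<otimes>\<^bsub>M\<^esub> z b' (A \<otimes>\<^bsub>G\<^esub> B) \<one>\<^bsub>G\<^esub> = z \<one>\<^bsub>N\<^esub> A B \<otimes>\<^bsub>M\<^esub> aM (prj A) (z b B \<one>\<^bsub>G\<^esub>)"
    using right_shift[of A b B] A b B by (simp add: b'_def g_def)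
  have additivity: "z c q \<one>\<^bsub>G\<^esub> = z a (A \<otimes>\<^bsub>G\<^esub> g) \<one>\<^bsub>G\<^esub> \<otimes>\<^bsub>M\<^esub> z b' (A \<otimes>\<^bsub>G\<^esub> B) \<one>\<^bsub>G\<^esub> \<otimes>\<^bsub>M\<^esub> z x q \<one>\<^bsub>G\<^esub>"
    using twisted_additivity[of a "b' \<otimes>\<^bsub>N\<^esub> x" q] twisted_additivity[of b' x q] a b' x q A B g
    by (simp add: c b'_def[symmetric] G.m_assoc xq Ag M.m_assoc)
  have x_split: "z x q \<one>\<^bsub>G\<^esub> \<otimes>\<^bsub>M\<^esub> z \<one>\<^bsub>N\<^esub> (mu x) q = z x \<one>\<^bsub>G\<^esub> \<one>\<^bsub>G\<^esub>"
    using module_part_split[of x q] x q by simp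
  have "z \<one>\<^bsub>N\<^esub> h g \<otimes>\<^bsub>M\<^esub> z c q \<one>\<^bsub>G\<^esub> \<otimes>\<^bsub>M\<^esub> z \<one>\<^bsub>N\<^esub> (mu x) q
      = (z \<one>\<^bsub>N\<^esub> h g \<otimes>\<^bsub>M\<^esub> z a (A \<otimes>\<^bsub>G\<^esub> g) \<one>\<^bsub>G\<^esub>) \<otimes>\<^bsub>M\<^esub> z b' (A \<otimes>\<^bsub>G\<^esub> B) \<one>\<^bsub>G\<^esub>
        \<otimes>\<^bsub>M\<^esub> (z x q \<one>\<^bsub>G\<^esub> \<otimes>\<^bsub>M\<^esub> z \<one>\<^bsub>N\<^esub> (mu x) q)"
    using a b' x A B q g by (simp add: additivity h_def M.m_assoc)
  also have "\<dots> = z a A \<one>\<^bsub>G\<^esub> \<otimes>\<^bsub>M\<^esub> (z \<one>\<^bsub>N\<^esub> A g \<otimes>\<^bsub>M\<^esub> z b' (A \<otimes>\<^bsub>G\<^esub> B) \<one>\<^bsub>G\<^esub>) \<otimes>\<^bsub>M\<^esub> z x \<one>\<^bsub>G\<^esub> \<one>\<^bsub>G\<^esub>"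
    using a b' x A B q g by (simp add: left x_split M.m_assoc)
  also have "\<dots> = (z x \<one>\<^bsub>G\<^esub> \<one>\<^bsub>G\<^esub> \<otimes>\<^bsub>M\<^esub> z \<one>\<^bsub>N\<^esub> A B) \<otimes>\<^bsub>M\<^esub> (z a A \<one>\<^bsub>G\<^esub> \<otimes>\<^bsub>M\<^esub> aM (prj A) (z b B \<one>\<^bsub>G\<^esub>))"
    using a b x A B AP by (simp add: right M.m_ac)
  finally show ?thesis .
qed

end

lemma (in crossed_module_with_module) pointed_cocycleI:
  assumes "z \<in> Z2_pt G N M mu act prj aM"
  shows "pointed_cocycle G N P M mu act prj aM z"
  by unfold_locales (use assms in \<open>auto simp: Z2_pt_def C2_pt_def C2_def\<close>)

locale sectioned_crossed_module = crossed_module_with_module +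
  fixes s1 s0
  assumes mu_image: "mu ` carrier N = kernel G P prj"
    and s0_closed: "p \<in> carrier P \<Longrightarrow> s0 p \<in> carrier G"
    and s0_prj: "p \<in> carrier P \<Longrightarrow> prj (s0 p) = p"
    and s0_one: "s0 \<one>\<^bsub>P\<^esub> = \<one>\<^bsub>G\<^esub>"
    and s1_closed: "x \<in> mu ` carrier N \<Longrightarrow> s1 x \<in> carrier N"
    and s1_mu: "x \<in> mu ` carrier N \<Longrightarrow> mu (s1 x) = x"
    and s1_one: "s1 \<one>\<^bsub>G\<^esub> = \<one>\<^bsub>N\<^esub>"
begin

lemma prj_mu [simp]: "m \<in> carrier N \<Longrightarrow> prj (mu m) = \<one>\<^bsub>P\<^esub>"
  using mu_image by (auto simp: kernel_def)

lemma s1_kernel: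
  assumes "x \<in> carrier G" "prj x = \<one>\<^bsub>P\<^esub>"
  shows "s1 x \<in> carrier N" and "mu (s1 x) = x"
  using assms mu_image s1_closed s1_mu by (auto simp: kernel_def)

lemma s0_prj_closed [simp]: "g \<in> carrier G \<Longrightarrow> s0 (prj g) \<in> carrier G"
  by (simp add: s0_closed)

lemma prj_s0_prj [simp]: "g \<in> carrier G \<Longrightarrow> prj (s0 (prj g)) = prj g"
  by (simp add: s0_prj)

abbreviation ker_rep where
  "ker_rep g \<equiv> s1 (g \<otimes>\<^bsub>G\<^esub> inv\<^bsub>G\<^esub> s0 (prj g))"

lemma ker_rep:
  assumes "g \<in> carrier G"
  shows "ker_rep g \<in> carrier N" and "mu (ker_rep g) \<otimes>\<^bsub>G\<^esub> s0 (prj g) = g"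
  using s1_kernel[of "g \<otimes>\<^bsub>G\<^esub> inv\<^bsub>G\<^esub> s0 (prj g)"] assms by (simp_all add: G.m_assoc)

lemma std_module_part:
  assumes z: "z \<in> C2_pt N G M" and m: "m \<in> carrier N"
  shows "part_M G (std G M mu prj aM s1 s0 z) m
    = z m \<one>\<^bsub>G\<^esub> \<one>\<^bsub>G\<^esub> \<otimes>\<^bsub>M\<^esub> inv\<^bsub>M\<^esub> (z (s1 (mu m)) \<one>\<^bsub>G\<^esub> \<one>\<^bsub>G\<^esub>)"
  using z m s1_kernel[of "mu m"]
  by (simp add: C2_pt_def C2_def part_M_def std_def d1_def sigma_std_def s0_one s1_one aM_one)

lemma std_group_part:
  assumes "h \<in> carrier G" "g \<in> carrier G"
  shows "part_G N (std G M mu prj aM s1 s0 z) h g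
    = z \<one>\<^bsub>N\<^esub> h g \<otimes>\<^bsub>M\<^esub> inv\<^bsub>M\<^esub> (z (ker_rep h) (s0 (prj h)) \<one>\<^bsub>G\<^esub>
        \<otimes>\<^bsub>M\<^esub> inv\<^bsub>M\<^esub> (z (ker_rep (h \<otimes>\<^bsub>G\<^esub> g)) (s0 (prj (h \<otimes>\<^bsub>G\<^esub> g))) \<one>\<^bsub>G\<^esub>)
        \<otimes>\<^bsub>M\<^esub> aM (prj h) (z (ker_rep g) (s0 (prj g)) \<one>\<^bsub>G\<^esub>))"
  using assms by (simp add: part_G_def std_def d1_def sigma_std_def)

theorem standardised_cocycle_module_part:
  assumes zZ: "z \<in> Z2_pt G N M mu act prj aM" and m: "m \<in> carrier N"
  shows "part_M G (std G M mu prj aM s1 s0 z) m = part_M G z (m \<otimes>\<^bsub>N\<^esub> inv\<^bsub>N\<^esub> (s1 (mu m)))"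
proof -
  interpret pointed_cocycle G N P M mu act prj aM z by (rule pointed_cocycleI[OF zZ])
  define s where "s = s1 (mu m)"
  have s: "s \<in> carrier N" "mu s = mu m" using m s1_kernel[of "mu m"] by (simp_all add: s_def)
  define p where "p = m \<otimes>\<^bsub>N\<^esub> inv\<^bsub>N\<^esub> s"
  have p: "p \<in> carrier N" "mu p = \<one>\<^bsub>G\<^esub>" "p \<otimes>\<^bsub>N\<^esub> s = m"
    using m s by (simp_all add: p_def N.m_assoc)
  have decomposition: "z m \<one>\<^bsub>G\<^esub> \<one>\<^bsub>G\<^esub> = z p \<one>\<^bsub>G\<^esub> \<one>\<^bsub>G\<^esub> \<otimes>\<^bsub>M\<^esub> z s \<one>\<^bsub>G\<^esub> \<one>\<^bsub>G\<^esub>"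
    using twisted_additivity[of p s "\<one>\<^bsub>G\<^esub>"] kernel_module_part[of p "mu s"] m p s by simp
  have "part_M G (std G M mu prj aM s1 s0 z) m = z m \<one>\<^bsub>G\<^esub> \<one>\<^bsub>G\<^esub> \<otimes>\<^bsub>M\<^esub> inv\<^bsub>M\<^esub> (z s \<one>\<^bsub>G\<^esub> \<one>\<^bsub>G\<^esub>)"
    using std_module_part[of z m] zZ m by (simp add: Z2_pt_def s_def)
  also have "\<dots> = z p \<one>\<^bsub>G\<^esub> \<one>\<^bsub>G\<^esub>"
    using decomposition m p s by (simp add: M.inv_solve_right')
  finally show ?thesis
    by (simp add: part_M_def p_def s_def)
qed

theorem standardised_cocycle_group_part:
  assumes zZ: "z \<in> Z2_pt G N M mu act prj aM" and h: "h \<in> carrier G" and g: "g \<in> carrier G"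
  shows "part_G N (std G M mu prj aM s1 s0 z) h g
    = part_M G z (inv\<^bsub>N\<^esub> (ker_rep h) \<otimes>\<^bsub>N\<^esub> act h (inv\<^bsub>N\<^esub> (ker_rep g)) \<otimes>\<^bsub>N\<^esub> ker_rep (h \<otimes>\<^bsub>G\<^esub> g))
      \<otimes>\<^bsub>M\<^esub> inv\<^bsub>M\<^esub> (part_G N z
          (mu (s1 (s0 (prj h) \<otimes>\<^bsub>G\<^esub> s0 (prj g) \<otimes>\<^bsub>G\<^esub> inv\<^bsub>G\<^esub> (s0 (prj h \<otimes>\<^bsub>P\<^esub> prj g)))))
          (s0 (prj h \<otimes>\<^bsub>P\<^esub> prj g)))
      \<otimes>\<^bsub>M\<^esub> part_G N z (s0 (prj h)) (s0 (prj g))"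
proof -
  interpret pointed_cocycle G N P M mu act prj aM z by (rule pointed_cocycleI[OF zZ])
  define A B q where "A = s0 (prj h)" and "B = s0 (prj g)" and "q = s0 (prj h \<otimes>\<^bsub>P\<^esub> prj g)"
  define a b c where "a = ker_rep h" and "b = ker_rep g" and "c = ker_rep (h \<otimes>\<^bsub>G\<^esub> g)"
  define x where "x = inv\<^bsub>N\<^esub> a \<otimes>\<^bsub>N\<^esub> act h (inv\<^bsub>N\<^esub> b) \<otimes>\<^bsub>N\<^esub> c"
  have ABq: "A \<in> carrier G" "B \<in> carrier G" "q \<in> carrier G" "prj A = prj h"
    using h g by (simp_all add: A_def B_def q_def s0_closed)
  have a: "a \<in> carrier N" "mu a \<otimes>\<^bsub>G\<^esub> A = h" using ker_rep[OF h] by (simp_all add: a_def A_def)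
  have b: "b \<in> carrier N" "mu b \<otimes>\<^bsub>G\<^esub> B = g" using ker_rep[OF g] by (simp_all add: b_def B_def)
  have c: "c \<in> carrier N" "mu c \<otimes>\<^bsub>G\<^esub> q = h \<otimes>\<^bsub>G\<^esub> g"
    using ker_rep[of "h \<otimes>\<^bsub>G\<^esub> g"] h g by (simp_all add: c_def q_def)
  note x = twisted_quotient[OF a(1) b(1) c(1) ABq(1-3) a(2) b(2) c(2), folded x_def]
  have mu_x: "mu (s1 (A \<otimes>\<^bsub>G\<^esub> B \<otimes>\<^bsub>G\<^esub> inv\<^bsub>G\<^esub> q)) = mu x"
  proof -
    have "A \<otimes>\<^bsub>G\<^esub> B \<otimes>\<^bsub>G\<^esub> inv\<^bsub>G\<^esub> q = mu x"
      using x(1,3) ABq by (simp add: G.inv_solve_right')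
    then show ?thesis using x(1) by (simp add: s1_mu)
  qed
  have std_eq: "part_G N (std G M mu prj aM s1 s0 z) h g
      = z \<one>\<^bsub>N\<^esub> h g \<otimes>\<^bsub>M\<^esub> inv\<^bsub>M\<^esub> (z a A \<one>\<^bsub>G\<^esub> \<otimes>\<^bsub>M\<^esub> inv\<^bsub>M\<^esub> (z c q \<one>\<^bsub>G\<^esub>) \<otimes>\<^bsub>M\<^esub> aM (prj h) (z b B \<one>\<^bsub>G\<^esub>))"
    using std_group_part[OF h g] h g by (simp add: a_def b_def c_def A_def B_def q_def)
  have "z \<one>\<^bsub>N\<^esub> h g \<otimes>\<^bsub>M\<^esub> z c q \<one>\<^bsub>G\<^esub> \<otimes>\<^bsub>M\<^esub> z \<one>\<^bsub>N\<^esub> (mu x) q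
    = (z x \<one>\<^bsub>G\<^esub> \<one>\<^bsub>G\<^esub> \<otimes>\<^bsub>M\<^esub> z \<one>\<^bsub>N\<^esub> A B) \<otimes>\<^bsub>M\<^esub> (z a A \<one>\<^bsub>G\<^esub> \<otimes>\<^bsub>M\<^esub> aM (prj h) (z b B \<one>\<^bsub>G\<^esub>))"
    using group_part_decomposition[of a b x A B q c] a b x ABq by simp
  then have "part_G N (std G M mu prj aM s1 s0 z) h g
      = z x \<one>\<^bsub>G\<^esub> \<one>\<^bsub>G\<^esub> \<otimes>\<^bsub>M\<^esub> inv\<^bsub>M\<^esub> (z \<one>\<^bsub>N\<^esub> (mu x) q) \<otimes>\<^bsub>M\<^esub> z \<one>\<^bsub>N\<^esub> A B"
    unfolding std_eq using a b c x ABq h g by (intro M.difference_of_alternating_sum) simp_all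
  then show ?thesis
    unfolding a_def[symmetric] b_def[symmetric] c_def[symmetric]
    unfolding x_def[symmetric] A_def[symmetric] B_def[symmetric] q_def[symmetric]
    unfolding mu_x part_M_def part_G_def .
qed

theorem standardised_coboundary_module_part:
  assumes bB: "b \<in> B2_pt G N M mu prj aM" and m: "m \<in> carrier N"
  shows "part_M G (std G M mu prj aM s1 s0 b) m = \<one>\<^bsub>M\<^esub>"
proof -
  obtain c where c: "c \<in> C1 G M"
    and b_eq: "\<forall>n\<in>carrier N. \<forall>h\<in>carrier G. \<forall>g\<in>carrier G. b n h g = d1 G M mu prj aM c n h g"
    using bB by (auto simp: B2_pt_def)
  have module_value: "b n \<one>\<^bsub>G\<^esub> \<one>\<^bsub>G\<^esub> = c (mu n)" if n: "n \<in> carrier N" for n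
    using b_eq n funcset_mem[OF c[unfolded C1_def]]
    by (simp add: d1_def aM_one M.m_assoc)
  have "part_M G (std G M mu prj aM s1 s0 b) m
      = b m \<one>\<^bsub>G\<^esub> \<one>\<^bsub>G\<^esub> \<otimes>\<^bsub>M\<^esub> inv\<^bsub>M\<^esub> (b (s1 (mu m)) \<one>\<^bsub>G\<^esub> \<one>\<^bsub>G\<^esub>)"
    using std_module_part[of b m] bB m by (simp add: B2_pt_def)
  also have "\<dots> = \<one>\<^bsub>M\<^esub>"
    using m s1_kernel[of "mu m"] funcset_mem[OF c[unfolded C1_def]] by (simp add: module_value)
  finally show ?thesis .
qed

text \<open>Proposition 4.4 (b), group part: for \<open>b = dc\<close> the standardisation is the group
  coboundary \<open>dc\<^sub>0\<close> of \<open>c\<^sub>0 = c \<circ> s\<^sup>0\<close>, because \<open>\<sigma>\<^sub>b(g) = c(g) - c([\<bar>g])\<close>.\<close>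
theorem standardised_coboundary_group_part:
  assumes c: "c \<in> C1_pt G M"
    and b_eq: "\<forall>m\<in>carrier N. \<forall>h\<in>carrier G. \<forall>g\<in>carrier G. b m h g = d1 G M mu prj aM c m h g"
    and h: "h \<in> carrier G" and g: "g \<in> carrier G"
  shows "part_G N (std G M mu prj aM s1 s0 b) h g = d_grp P M aM (\<lambda>p. c (s0 p)) (prj h) (prj g)"
proof -
  have cM [simp]: "y \<in> carrier G \<Longrightarrow> c y \<in> carrier M" for y
    using c by (auto simp: C1_pt_def C1_def)
  have c_one: "c \<one>\<^bsub>G\<^esub> = \<one>\<^bsub>M\<^esub>" using c by (simp add: C1_pt_def)
  have sigma: "b (ker_rep y) (s0 (prj y)) \<one>\<^bsub>G\<^esub> = c y \<otimes>\<^bsub>M\<^esub> inv\<^bsub>M\<^esub> (c (s0 (prj y)))"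
    if y: "y \<in> carrier G" for y
    using b_eq ker_rep[OF y] y by (simp add: d1_def c_one)
  have hP: "prj h \<in> carrier P" using h by simp
  have "part_G N (std G M mu prj aM s1 s0 b) h g
      = c h \<otimes>\<^bsub>M\<^esub> inv\<^bsub>M\<^esub> (c (h \<otimes>\<^bsub>G\<^esub> g)) \<otimes>\<^bsub>M\<^esub> aM (prj h) (c g)
        \<otimes>\<^bsub>M\<^esub> inv\<^bsub>M\<^esub> ((c h \<otimes>\<^bsub>M\<^esub> inv\<^bsub>M\<^esub> (c (s0 (prj h))))
          \<otimes>\<^bsub>M\<^esub> inv\<^bsub>M\<^esub> (c (h \<otimes>\<^bsub>G\<^esub> g) \<otimes>\<^bsub>M\<^esub> inv\<^bsub>M\<^esub> (c (s0 (prj (h \<otimes>\<^bsub>G\<^esub> g)))))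
          \<otimes>\<^bsub>M\<^esub> (aM (prj h) (c g) \<otimes>\<^bsub>M\<^esub> inv\<^bsub>M\<^esub> (aM (prj h) (c (s0 (prj g))))))"
    using std_group_part[OF h g] b_eq h g hP
    by (simp add: sigma d1_def aM_mult aM_inv del: prj.hom_mult)
  also have "\<dots> = c (s0 (prj h)) \<otimes>\<^bsub>M\<^esub> inv\<^bsub>M\<^esub> (c (s0 (prj (h \<otimes>\<^bsub>G\<^esub> g))))
      \<otimes>\<^bsub>M\<^esub> aM (prj h) (c (s0 (prj g)))"
    using h g hP by (intro M.difference_of_differences) (simp_all add: s0_closed)
  finally show ?thesis
    using h g by (simp add: d_grp_def)
qed

end

lemma sectioned_crossed_module_of_extension:
  assumes "crossed_module_extension P K aK G N mu act iota prj"
    and "section_system P G N mu prj s1 s0"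
    and "abelian_module P M aM"
  shows "sectioned_crossed_module G N P M mu act prj aM s1 s0"
  using assms
  by (auto simp: sectioned_crossed_module_def sectioned_crossed_module_axioms_def
      crossed_module_with_module_def crossed_module_with_module_axioms_def
      crossed_module_extension_def crossed_module_def abelian_module_def
      action_by_homs_def section_system_def comm_group_def)

theorem proposition4p4:
  fixes P :: "'p monoid" and K :: "'k monoid" and aK :: "'p \<Rightarrow> 'k \<Rightarrow> 'k"
    and G :: "'g monoid" and N :: "'n monoid" and mu :: "'n \<Rightarrow> 'g" and act :: "'g \<Rightarrow> 'n \<Rightarrow> 'n"
    and iota :: "'k \<Rightarrow> 'n" and prj :: "'g \<Rightarrow> 'p"
    and s1 :: "'g \<Rightarrow> 'n" and s0 :: "'p \<Rightarrow> 'g"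
    and M :: "'m monoid" and aM :: "'p \<Rightarrow> 'm \<Rightarrow> 'm"
  assumes E: "crossed_module_extension P K aK G N mu act iota prj"
    and S: "section_system P G N mu prj s1 s0"
    and Mmod: "abelian_module P M aM"
  shows
   "(\<forall>z \<in> Z2_pt G N M mu act prj aM.
      (\<forall>m\<in>carrier N.
         part_M G (std G M mu prj aM s1 s0 z) m
           = part_M G z (m \<otimes>\<^bsub>N\<^esub> inv\<^bsub>N\<^esub> (s1 (mu m)))) \<and>
      (\<forall>h\<in>carrier G. \<forall>g\<in>carrier G.
         part_G N (std G M mu prj aM s1 s0 z) h g
           = part_M G z
               (inv\<^bsub>N\<^esub> (s1 (h \<otimes>\<^bsub>G\<^esub> inv\<^bsub>G\<^esub> (s0 (prj h))))
                \<otimes>\<^bsub>N\<^esub> act h (inv\<^bsub>N\<^esub> (s1 (g \<otimes>\<^bsub>G\<^esub> inv\<^bsub>G\<^esub> (s0 (prj g)))))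
                \<otimes>\<^bsub>N\<^esub> s1 ((h \<otimes>\<^bsub>G\<^esub> g) \<otimes>\<^bsub>G\<^esub> inv\<^bsub>G\<^esub> (s0 (prj (h \<otimes>\<^bsub>G\<^esub> g)))))
             \<otimes>\<^bsub>M\<^esub> inv\<^bsub>M\<^esub> (part_G N z
                  (mu (s1 (s0 (prj h) \<otimes>\<^bsub>G\<^esub> s0 (prj g) \<otimes>\<^bsub>G\<^esub> inv\<^bsub>G\<^esub> (s0 (prj h \<otimes>\<^bsub>P\<^esub> prj g)))))
                  (s0 (prj h \<otimes>\<^bsub>P\<^esub> prj g)))
             \<otimes>\<^bsub>M\<^esub> part_G N z (s0 (prj h)) (s0 (prj g)))) \<and>
    (\<forall>b \<in> B2_pt G N M mu prj aM.
      (\<forall>m\<in>carrier N. part_M G (std G M mu prj aM s1 s0 b) m = \<one>\<^bsub>M\<^esub>) \<and>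
      (\<forall>c \<in> C1_pt G M.
         (\<forall>m\<in>carrier N. \<forall>h\<in>carrier G. \<forall>g\<in>carrier G. b m h g = d1 G M mu prj aM c m h g) \<longrightarrow>
         (\<forall>h\<in>carrier G. \<forall>g\<in>carrier G.
            part_G N (std G M mu prj aM s1 s0 b) h g = d_grp P M aM (\<lambda>p. c (s0 p)) (prj h) (prj g))))"
proof -
  interpret sectioned_crossed_module G N P M mu act prj aM s1 s0
    using sectioned_crossed_module_of_extension[OF E S Mmod] .
  show ?thesis
    using standardised_cocycle_module_part standardised_cocycle_group_part
      standardised_coboundary_module_part standardised_coboundary_group_part
    by blast
qed

end
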